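(* Fix a sequence of matchings and any non-negative load vector $x^{(t_1)}$ at the end of round $t_1$, and let $\mathcal{T}$ be the set of all tokens. Let $D\subseteq V$ and $t_2 > t_1$. Then the random variable $Z:= \sum_{i \in \mathcal{T}} \mathbf{1}_{w_i^{(t_2)} \in D} = \sum_{u \in D} x_u^{(t_2)}$ satisfies, for any $\delta > 0$, \[ \Pr[ Z \geq (1+\delta) \mathbb{E}[Z] ] \leq \left( \frac{\mathrm{e}^{\delta}}{(1+\delta)^{1+\delta}} \right)^{\mathbb{E}[Z]}. \]
   Context: Token-based description of the discrete load balancing protocol on a graph $G=(V,E)$ with matchings $\mathbf{M}^{(t)}\subseteq E$ used in round $t$: tokens are distinguishable; $w^{(t)}_i$ is the node holding token $i$ at the end of round $t$, $x^{(t)}_u$ the number of tokens at $u$. If $u,v$ are matched in round $t$, all tokens at $u$ and $v$ are put in an urn; with probability $1/2$ node $u$ draws $\lceil (x^{(t-1)}_u+x^{(t-1)}_v)/2\rceil$ tokens uniformly at random without replacement, otherwise $\lfloor (x^{(t-1)}_u+x^{(t-1)}_v)/2\rfloor$ (independently over matched edges and rounds); $v$ gets the rest. Unmatched nodes keep their tokens. *)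

theory Defs
  imports "HOL-Probability.Probability"
begin

text \<open>A matching used in a round is a set of ordered pairs (u,v) of distinct
  nodes; the first component is the node that flips the coin for drawing the
  ceiling (with probability 1/2).\<close>

definition is_matching :: "'v set \<Rightarrow> 'v set set \<Rightarrow> ('v \<times> 'v) set \<Rightarrow> bool" where
  "is_matching V E M \<longleftrightarrow> finite M \<and>
     (\<forall>(u,v)\<in>M. u \<noteq> v \<and> u \<in> V \<and> v \<in> V \<and> {u,v} \<in> E) \<and>
     (\<forall>e\<in>M. \<forall>e'\<in>M. e \<noteq> e' \<longrightarrow> {fst e, snd e} \<inter> {fst e', snd e'} = {})"

definition edge_draw :: "'t set \<Rightarrow> ('t \<Rightarrow> 'v) \<Rightarrow> 'v \<times> 'v \<Rightarrow> 't set pmf" where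
  "edge_draw Tok w e =
     bind_pmf (bernoulli_pmf (1/2)) (\<lambda>b.
       let S = {i \<in> Tok. w i = fst e \<or> w i = snd e};
           k = (if b then (card S + 1) div 2 else card S div 2)
       in pmf_of_set {A. A \<subseteq> S \<and> card A = k})"

definition new_pos :: "('v \<times> 'v) set \<Rightarrow> ('t \<Rightarrow> 'v) \<Rightarrow> ('v \<times> 'v \<Rightarrow> 't set) \<Rightarrow> 't \<Rightarrow> 'v" where
  "new_pos M w C i =
     (if \<exists>e\<in>M. w i = fst e \<or> w i = snd e then
        (let e = (SOME e. e \<in> M \<and> (w i = fst e \<or> w i = snd e))
         in if i \<in> C e then fst e else snd e)
      else w i)"

definition round_step :: "'t set \<Rightarrow> ('v \<times> 'v) set \<Rightarrow> ('t \<Rightarrow> 'v) \<Rightarrow> ('t \<Rightarrow> 'v) pmf" where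
  "round_step Tok M w = map_pmf (new_pos M w) (Pi_pmf M {} (edge_draw Tok w))"

text \<open>Token positions after n further rounds starting at the end of round t1,
  round t using matching Ms t.\<close>
fun run :: "'t set \<Rightarrow> (nat \<Rightarrow> ('v \<times> 'v) set) \<Rightarrow> nat \<Rightarrow> ('t \<Rightarrow> 'v) \<Rightarrow> nat \<Rightarrow> ('t \<Rightarrow> 'v) pmf" where
  "run Tok Ms t1 w0 0 = return_pmf w0"
| "run Tok Ms t1 w0 (Suc n) = bind_pmf (run Tok Ms t1 w0 n) (round_step Tok (Ms (t1 + Suc n)))"

definition load :: "'t set \<Rightarrow> ('t \<Rightarrow> 'v) \<Rightarrow> 'v \<Rightarrow> nat" where
  "load Tok w u = card {i \<in> Tok. w i = u}"

end

theory Submission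
  imports Defs
begin

text \<open>
  On a matched edge carrying N tokens, a uniformly random set of \<lceil>N/2\<rceil> or \<lfloor>N/2\<rfloor> of
  them moves to the first endpoint. For a nonnegative weight f on the nodes, the expected
  product of f over the new positions of these tokens is thus an average of two terms
  a^k * b^(N-k) with k balanced, which by AM-GM is at most ((a + b)/2)^N, the value for
  independent fair moves. Since edges draw independently, induction over the rounds bounds
  E[\<Prod>_i f(w_i)] by the product of single-token expectations, while sums keep their
  single-token expectation exactly. Taking f = 1 + \<delta> on D and 1 elsewhere gives
  E[(1+\<delta>)^Z] \<le> \<Prod>_i (1 + \<delta> q_i) \<le> exp(\<delta> E[Z]), with q_i the probability that token i ends in D,
  and Markov's inequality yields the Chernoff bound.
\<close>

lemma integrable_pmf_bounded:
  fixes f :: "'a \<Rightarrow> real"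
  assumes "\<And>x. \<bar>f x\<bar> \<le> B"
  shows "integrable (measure_pmf p) f"
  by (rule measure_pmf.integrable_const_bound[where B = B]) (use assms in auto)

lemma abs_expectation_pmf_le:
  fixes f :: "'a \<Rightarrow> real"
  assumes "\<And>x. \<bar>f x\<bar> \<le> B"
  shows "\<bar>measure_pmf.expectation p f\<bar> \<le> B"
proof -
  have "\<bar>measure_pmf.expectation p f\<bar> \<le> measure_pmf.expectation p (\<lambda>x. \<bar>f x\<bar>)"
    by (rule integral_abs_bound)
  also have "\<dots> \<le> B"
    by (intro measure_pmf.integral_le_const AE_pmfI integrable_pmf_bounded) (use assms in auto)
  finally show ?thesis .
qed

lemma expectation_bind_pmf:
  fixes f :: "'b \<Rightarrow> real"
  assumes "\<And>y. \<bar>f y\<bar> \<le> B"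
  shows "measure_pmf.expectation (bind_pmf p q) f =
         measure_pmf.expectation p (\<lambda>x. measure_pmf.expectation (q x) f)"
  unfolding measure_pmf_bind
  by (rule integral_bind[where K = "count_space UNIV" and B = B and B' = 1])
     (auto simp: assms measure_pmf.emeasure_space_1 measure_pmf_in_subprob_algebra)

lemma expectation_bind_pmf_le:
  fixes f :: "'b \<Rightarrow> real" and g :: "'a \<Rightarrow> real"
  assumes "\<And>y. \<bar>f y\<bar> \<le> B" and "\<And>x. \<bar>g x\<bar> \<le> C"
    and "\<And>x. measure_pmf.expectation (q x) f \<le> g x"
  shows "measure_pmf.expectation (bind_pmf p q) f \<le> measure_pmf.expectation p g"
  unfolding expectation_bind_pmf[OF assms(1)]
  by (intro integral_mono integrable_pmf_bounded[where B = B] integrable_pmf_bounded[where B = C]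
      abs_expectation_pmf_le assms)

lemma chernoff_bound_from_mgf:
  fixes Z :: "'a \<Rightarrow> real" and \<delta> \<mu> :: real
  assumes "\<delta> > 0" and "\<And>x. Z x \<le> C"
    and mgf: "measure_pmf.expectation p (\<lambda>x. (1 + \<delta>) powr Z x) \<le> exp (\<delta> * \<mu>)"
  shows "measure_pmf.prob p {x. Z x \<ge> (1 + \<delta>) * \<mu>}
         \<le> (exp \<delta> / (1 + \<delta>) powr (1 + \<delta>)) powr \<mu>"
proof -
  let ?c = "(1 + \<delta>) powr ((1 + \<delta>) * \<mu>)"
  have "{x. Z x \<ge> (1 + \<delta>) * \<mu>} = {x \<in> space (measure_pmf p). (1 + \<delta>) powr Z x \<ge> ?c}"
    using \<open>\<delta> > 0\<close> by auto
  also have "measure_pmf.prob p \<dots> \<le> measure_pmf.expectation p (\<lambda>x. (1 + \<delta>) powr Z x) / ?c"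
    using \<open>\<delta> > 0\<close> assms(2)
    by (intro integral_Markov_inequality_measure[where A = UNIV] integrable_pmf_bounded[where B = "(1 + \<delta>) powr C"])
       (auto intro: powr_mono)
  also have "\<dots> \<le> exp (\<delta> * \<mu>) / ?c"
    using mgf by (simp add: divide_right_mono)
  also have "\<dots> = (exp \<delta> / (1 + \<delta>) powr (1 + \<delta>)) powr \<mu>"
    using \<open>\<delta> > 0\<close> by (simp add: powr_divide powr_powr exp_powr_real mult.commute)
  finally show ?thesis .
qed

lemma mean_of_balanced_powers_le:
  fixes a b :: real
  assumes "0 \<le> a" "0 \<le> b"
  shows "(a ^ ((N + 1) div 2) * b ^ (N div 2) + a ^ (N div 2) * b ^ ((N + 1) div 2)) / 2
         \<le> ((a + b) / 2) ^ N"
proof -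
  have "a * b \<le> ((a + b) / 2)\<^sup>2"
    using sum_squares_ge_zero[of "a - b" 0] by (simp add: power2_eq_square field_simps)
  then have pairs: "(a * b) ^ m \<le> ((a + b) / 2) ^ (2 * m)" for m
    using assms by (simp add: power_mono power_mult)
  obtain m where "N = 2 * m \<or> N = 2 * m + 1"
    by (metis dvd_mult_div_cancel odd_two_times_div_two_succ)
  then show ?thesis
  proof
    assume "N = 2 * m"
    then show ?thesis using pairs by (simp add: power_mult_distrib)
  next
    assume N: "N = 2 * m + 1"
    have "(a * b) ^ m * ((a + b) / 2) \<le> ((a + b) / 2) ^ (2 * m) * ((a + b) / 2)"
      using assms by (intro mult_right_mono pairs) simp
    then show ?thesis using N by (simp add: power_mult_distrib field_simps)
  qed
qed

lemma halves_complement: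
  "n - (n + 1) div 2 = n div 2" "n - n div 2 = (n + 1) div 2" "(n + 1) div 2 + n div 2 = n"
  for n :: nat
  by presburger+

lemma prod_le_power_card:
  fixes f :: "'a \<Rightarrow> 'b :: linordered_semidom"
  assumes "\<And>i. i \<in> I \<Longrightarrow> 0 \<le> f i" "\<And>i. i \<in> I \<Longrightarrow> f i \<le> B"
  shows "prod f I \<le> B ^ card I"
proof -
  have "prod f I \<le> (\<Prod>i\<in>I. B)" using assms by (intro prod_mono) auto
  then show ?thesis by simp
qed

lemma prod_if_mem_subset:
  fixes f :: "'a \<Rightarrow> 'b :: comm_monoid_mult"
  assumes "finite T" "A \<subseteq> T"
  shows "(\<Prod>i\<in>T. f (if i \<in> A then u else v)) = f u ^ card A * f v ^ (card T - card A)"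
proof -
  have "(\<Prod>i\<in>T. f (if i \<in> A then u else v))
      = (\<Prod>i\<in>T - A. f (if i \<in> A then u else v)) * (\<Prod>i\<in>A. f (if i \<in> A then u else v))"
    by (rule prod.subset_diff[OF assms(2,1)])
  also have "\<dots> = (\<Prod>i\<in>T - A. f v) * (\<Prod>i\<in>A. f u)"
    by (intro arg_cong2[where f = "(*)"] prod.cong) auto
  finally show ?thesis
    using assms by (simp add: card_Diff_subset finite_subset ac_simps)
qed

lemma sum_if_mem_subset:
  fixes f :: "'a \<Rightarrow> 'b :: comm_semiring_1"
  assumes "finite T" "A \<subseteq> T"
  shows "(\<Sum>i\<in>T. f (if i \<in> A then u else v)) = of_nat (card A) * f u + of_nat (card T - card A) * f v"
proof -
  have "(\<Sum>i\<in>T. f (if i \<in> A then u else v))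
      = (\<Sum>i\<in>T - A. f (if i \<in> A then u else v)) + (\<Sum>i\<in>A. f (if i \<in> A then u else v))"
    by (rule sum.subset_diff[OF assms(2,1)])
  also have "\<dots> = (\<Sum>i\<in>T - A. f v) + (\<Sum>i\<in>A. f u)"
    by (intro arg_cong2[where f = "(+)"] sum.cong) auto
  finally show ?thesis
    using assms by (simp add: card_Diff_subset finite_subset ac_simps)
qed

lemma expectation_Pi_pmf_component:
  fixes h :: "'b \<Rightarrow> real"
  assumes "finite A" "x \<in> A"
  shows "measure_pmf.expectation (Pi_pmf A dflt p) (\<lambda>C. h (C x)) = measure_pmf.expectation (p x) h"
proof -
  have "measure_pmf.expectation (Pi_pmf A dflt p) (\<lambda>C. h (C x))
      = measure_pmf.expectation (map_pmf (\<lambda>C. C x) (Pi_pmf A dflt p)) h"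
    by simp
  also have "map_pmf (\<lambda>C. C x) (Pi_pmf A dflt p) = p x"
    using Pi_pmf_component[OF assms(1), of x dflt p] assms(2) by simp
  finally show ?thesis .
qed

text \<open>Of a matching only the vertex-disjointness of its pairs matters below.\<close>

definition vertex_disjoint :: "('v \<times> 'v) set \<Rightarrow> bool" where
  "vertex_disjoint M \<longleftrightarrow> finite M \<and>
     (\<forall>e\<in>M. \<forall>e'\<in>M. e \<noteq> e' \<longrightarrow> {fst e, snd e} \<inter> {fst e', snd e'} = {})"

definition edge_tokens :: "'t set \<Rightarrow> ('t \<Rightarrow> 'v) \<Rightarrow> 'v \<times> 'v \<Rightarrow> 't set" where
  "edge_tokens Tok w e = {i \<in> Tok. w i = fst e \<or> w i = snd e}"

definition unmatched_tokens :: "'t set \<Rightarrow> ('t \<Rightarrow> 'v) \<Rightarrow> ('v \<times> 'v) set \<Rightarrow> 't set" where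
  "unmatched_tokens Tok w M = {i \<in> Tok. \<not> (\<exists>e\<in>M. w i = fst e \<or> w i = snd e)}"

text \<open>\<open>matching_avg M f v\<close> is the expected value of \<open>f\<close> at the new position of a single
  token that sits at \<open>v\<close> before a round with matching \<open>M\<close>.\<close>

definition matching_avg :: "('v \<times> 'v) set \<Rightarrow> ('v \<Rightarrow> real) \<Rightarrow> 'v \<Rightarrow> real" where
  "matching_avg M f v =
     (if \<exists>e\<in>M. v = fst e \<or> v = snd e then
        (let e = (SOME e. e \<in> M \<and> (v = fst e \<or> v = snd e)) in (f (fst e) + f (snd e)) / 2)
      else f v)"

lemma vertex_disjoint_if_is_matching: "is_matching V E M \<Longrightarrow> vertex_disjoint M"
  unfolding is_matching_def vertex_disjoint_def by blast

lemma some_matching_edge_eq: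
  assumes "vertex_disjoint M" "e \<in> M" "v = fst e \<or> v = snd e"
  shows "(SOME e. e \<in> M \<and> (v = fst e \<or> v = snd e)) = e"
proof (rule some_equality)
  show "e \<in> M \<and> (v = fst e \<or> v = snd e)" using assms by blast
next
  fix e' assume "e' \<in> M \<and> (v = fst e' \<or> v = snd e')"
  then show "e' = e" using assms unfolding vertex_disjoint_def by blast
qed

lemma new_pos_edge_token:
  assumes "vertex_disjoint M" "e \<in> M" "i \<in> edge_tokens Tok w e"
  shows "new_pos M w C i = (if i \<in> C e then fst e else snd e)"
  using assms some_matching_edge_eq[OF assms(1,2), of "w i"]
  unfolding new_pos_def edge_tokens_def by (auto simp: Let_def)

lemma new_pos_unmatched_token:
  "i \<in> unmatched_tokens Tok w M \<Longrightarrow> new_pos M w C i = w i"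
  unfolding new_pos_def unmatched_tokens_def by auto

lemma matching_avg_edge_token:
  assumes "vertex_disjoint M" "e \<in> M" "i \<in> edge_tokens Tok w e"
  shows "matching_avg M f (w i) = (f (fst e) + f (snd e)) / 2"
  using assms some_matching_edge_eq[OF assms(1,2), of "w i"]
  unfolding matching_avg_def edge_tokens_def by (auto simp: Let_def)

lemma matching_avg_unmatched_token:
  "i \<in> unmatched_tokens Tok w M \<Longrightarrow> matching_avg M f (w i) = f (w i)"
  unfolding matching_avg_def unmatched_tokens_def by auto

lemma matching_avg_bounded:
  assumes "\<And>v. A \<le> f v" "\<And>v. f v \<le> B"
  shows "A \<le> matching_avg M f v" "matching_avg M f v \<le> B"
  using assms[of "fst (SOME e. e \<in> M \<and> (v = fst e \<or> v = snd e))"]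
    assms[of "snd (SOME e. e \<in> M \<and> (v = fst e \<or> v = snd e))"] assms[of v]
  unfolding matching_avg_def Let_def by auto

lemma matching_avg_affine:
  "matching_avg M (\<lambda>v. a + c * f v) = (\<lambda>v. a + c * matching_avg M f v)"
  unfolding matching_avg_def Let_def by (auto simp: fun_eq_iff field_simps)

context comm_monoid_set
begin

lemma split_matched_tokens:
  assumes "vertex_disjoint M" "finite Tok"
  shows "F g Tok = F (\<lambda>e. F g (edge_tokens Tok w e)) M \<^bold>* F g (unmatched_tokens Tok w M)"
proof -
  have fin: "finite M" "\<And>e. finite (edge_tokens Tok w e)" "finite (unmatched_tokens Tok w M)"
    using assms unfolding vertex_disjoint_def edge_tokens_def unmatched_tokens_def by auto
  have "Tok = (\<Union>e\<in>M. edge_tokens Tok w e) \<union> unmatched_tokens Tok w M"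
    unfolding edge_tokens_def unmatched_tokens_def by blast
  then have "F g Tok = F g ((\<Union>e\<in>M. edge_tokens Tok w e) \<union> unmatched_tokens Tok w M)"
    by (rule arg_cong)
  also have "\<dots> = F g (\<Union>e\<in>M. edge_tokens Tok w e) \<^bold>* F g (unmatched_tokens Tok w M)"
    using fin by (intro union_disjoint) (auto simp: edge_tokens_def unmatched_tokens_def)
  also have "F g (\<Union>e\<in>M. edge_tokens Tok w e) = F (\<lambda>e. F g (edge_tokens Tok w e)) M"
    using fin assms(1) by (intro UNION_disjoint) (unfold vertex_disjoint_def edge_tokens_def, blast+)
  finally show ?thesis .
qed

end





lemma expectation_edge_draw:
  fixes F :: "'t set \<Rightarrow> real"
  assumes "finite Tok" "\<And>A. \<bar>F A\<bar> \<le> B"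
    and "\<And>A. A \<subseteq> edge_tokens Tok w e \<Longrightarrow> F A = \<phi> (card A)"
  shows "measure_pmf.expectation (edge_draw Tok w e) F
         = (\<phi> ((card (edge_tokens Tok w e) + 1) div 2) + \<phi> (card (edge_tokens Tok w e) div 2)) / 2"
proof -
  let ?S = "edge_tokens Tok w e"
  have uniform: "measure_pmf.expectation (pmf_of_set {A. A \<subseteq> ?S \<and> card A = k}) F = \<phi> k"
    if "k \<le> card ?S" for k
  proof -
    have "{A. A \<subseteq> ?S \<and> card A = k} \<noteq> {}"
      using obtain_subset_with_card_n[OF that] by blast
    moreover have "finite {A. A \<subseteq> ?S \<and> card A = k}"
      by (rule finite_subset[of _ "Pow ?S"]) (use assms(1) in \<open>auto simp: edge_tokens_def\<close>)
    ultimately have "measure_pmf.expectation (pmf_of_set {A. A \<subseteq> ?S \<and> card A = k}) F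
        = measure_pmf.expectation (pmf_of_set {A. A \<subseteq> ?S \<and> card A = k}) (\<lambda>_. \<phi> k)"
      using assms(3) by (intro integral_cong_AE AE_pmfI) auto
    then show ?thesis by simp
  qed
  have "edge_draw Tok w e = bind_pmf (bernoulli_pmf (1/2)) (\<lambda>b.
      pmf_of_set {A. A \<subseteq> ?S \<and> card A = (if b then (card ?S + 1) div 2 else card ?S div 2)})"
    unfolding edge_draw_def edge_tokens_def by (simp add: Let_def)
  then show ?thesis
    by (simp add: expectation_bind_pmf[of F B, OF assms(2)] uniform)
qed

lemma expectation_edge_draw_prod_le:
  fixes f :: "'v \<Rightarrow> real" and w :: "'t \<Rightarrow> 'v" and e :: "'v \<times> 'v"
  assumes "finite Tok" and f: "\<And>v. 0 \<le> f v" "\<And>v. f v \<le> B"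
  defines "N \<equiv> card (edge_tokens Tok w e)"
  shows "measure_pmf.expectation (edge_draw Tok w e)
           (\<lambda>A. \<Prod>i\<in>edge_tokens Tok w e. f (if i \<in> A then fst e else snd e))
         \<le> ((f (fst e) + f (snd e)) / 2) ^ N"
proof -
  have bounded: "\<bar>\<Prod>i\<in>edge_tokens Tok w e. f (if i \<in> A then fst e else snd e)\<bar> \<le> B ^ N" for A
    unfolding N_def using f by (simp add: abs_of_nonneg prod_nonneg prod_le_power_card)
  have by_count: "(\<Prod>i\<in>edge_tokens Tok w e. f (if i \<in> A then fst e else snd e))
      = f (fst e) ^ card A * f (snd e) ^ (N - card A)" if "A \<subseteq> edge_tokens Tok w e" for A
    unfolding N_def using \<open>finite Tok\<close> that
    by (intro prod_if_mem_subset) (auto simp: edge_tokens_def)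
  have "measure_pmf.expectation (edge_draw Tok w e)
      (\<lambda>A. \<Prod>i\<in>edge_tokens Tok w e. f (if i \<in> A then fst e else snd e))
      = (f (fst e) ^ ((N + 1) div 2) * f (snd e) ^ (N - (N + 1) div 2)
         + f (fst e) ^ (N div 2) * f (snd e) ^ (N - N div 2)) / 2"
    unfolding N_def by (rule expectation_edge_draw[where \<phi> = "\<lambda>k. f (fst e) ^ k * f (snd e) ^ (N - k)",
      OF \<open>finite Tok\<close> bounded by_count, unfolded N_def])
  also have "\<dots> = (f (fst e) ^ ((N + 1) div 2) * f (snd e) ^ (N div 2)
      + f (fst e) ^ (N div 2) * f (snd e) ^ ((N + 1) div 2)) / 2"
    unfolding halves_complement ..
  also have "\<dots> \<le> ((f (fst e) + f (snd e)) / 2) ^ N"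
    using f by (intro mean_of_balanced_powers_le)
  finally show ?thesis .
qed

lemma expectation_edge_draw_sum:
  fixes g :: "'v \<Rightarrow> real" and w :: "'t \<Rightarrow> 'v" and e :: "'v \<times> 'v"
  assumes "finite Tok" and g: "\<And>v. \<bar>g v\<bar> \<le> B"
  defines "N \<equiv> card (edge_tokens Tok w e)"
  shows "measure_pmf.expectation (edge_draw Tok w e)
           (\<lambda>A. \<Sum>i\<in>edge_tokens Tok w e. g (if i \<in> A then fst e else snd e))
         = real N * ((g (fst e) + g (snd e)) / 2)"
proof -
  have bounded: "\<bar>\<Sum>i\<in>edge_tokens Tok w e. g (if i \<in> A then fst e else snd e)\<bar> \<le> real N * B" for A
    unfolding N_def using g by (intro order.trans[OF sum_abs sum_bounded_above])
  have by_count: "(\<Sum>i\<in>edge_tokens Tok w e. g (if i \<in> A then fst e else snd e))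
      = real (card A) * g (fst e) + real (N - card A) * g (snd e)" if "A \<subseteq> edge_tokens Tok w e" for A
    unfolding N_def using \<open>finite Tok\<close> that
    by (intro sum_if_mem_subset) (auto simp: edge_tokens_def)
  have "measure_pmf.expectation (edge_draw Tok w e)
      (\<lambda>A. \<Sum>i\<in>edge_tokens Tok w e. g (if i \<in> A then fst e else snd e))
      = (real ((N + 1) div 2) * g (fst e) + real (N - (N + 1) div 2) * g (snd e)
         + (real (N div 2) * g (fst e) + real (N - N div 2) * g (snd e))) / 2"
    unfolding N_def by (rule expectation_edge_draw[where \<phi> = "\<lambda>k. real k * g (fst e) + real (N - k) * g (snd e)",
      OF \<open>finite Tok\<close> bounded by_count, unfolded N_def])
  also have "\<dots> = (real ((N + 1) div 2) + real (N div 2)) * ((g (fst e) + g (snd e)) / 2)"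
    unfolding halves_complement by (simp add: algebra_simps add_divide_distrib)
  also have "\<dots> = real N * ((g (fst e) + g (snd e)) / 2)"
    unfolding of_nat_add[symmetric] halves_complement ..
  finally show ?thesis .
qed

lemma expectation_round_step_prod_le:
  fixes f :: "'v \<Rightarrow> real"
  assumes M: "vertex_disjoint M" and "finite Tok" and f: "\<And>v. 0 \<le> f v" "\<And>v. f v \<le> B"
  shows "measure_pmf.expectation (round_step Tok M w) (\<lambda>w'. \<Prod>i\<in>Tok. f (w' i))
         \<le> (\<Prod>i\<in>Tok. matching_avg M f (w i))"
proof -
  define G where "G e A = (\<Prod>i\<in>edge_tokens Tok w e. f (if i \<in> A then fst e else snd e))" for e A
  define K where "K = (\<Prod>i\<in>unmatched_tokens Tok w M. f (w i))"
  have G_nonneg: "0 \<le> G e A" for e A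
    unfolding G_def using f by (auto intro: prod_nonneg)
  have G_integrable: "integrable (measure_pmf p) (G e)" for p e
    unfolding G_def using f
    by (intro integrable_pmf_bounded[where B = "B ^ card (edge_tokens Tok w e)"])
       (simp add: abs_of_nonneg prod_nonneg prod_le_power_card)
  have split: "(\<Prod>i\<in>Tok. f (new_pos M w C i)) = (\<Prod>e\<in>M. G e (C e)) * K" for C
    unfolding prod.split_matched_tokens[OF M \<open>finite Tok\<close>, of _ w] G_def K_def
    by (intro arg_cong2[where f = "(*)"] prod.cong refl)
       (simp_all add: new_pos_edge_token[OF M] new_pos_unmatched_token)
  have "measure_pmf.expectation (round_step Tok M w) (\<lambda>w'. \<Prod>i\<in>Tok. f (w' i))
      = measure_pmf.expectation (Pi_pmf M {} (edge_draw Tok w)) (\<lambda>C. \<Prod>e\<in>M. G e (C e)) * K"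
    unfolding round_step_def by (simp add: split)
  also have "\<dots> = (\<Prod>e\<in>M. measure_pmf.expectation (edge_draw Tok w e) (G e)) * K"
    using M G_nonneg G_integrable by (subst expectation_prod_Pi_pmf) (auto simp: vertex_disjoint_def)
  also have "\<dots> \<le> (\<Prod>e\<in>M. ((f (fst e) + f (snd e)) / 2) ^ card (edge_tokens Tok w e)) * K"
  proof (intro mult_right_mono prod_mono conjI)
    fix e
    show "0 \<le> measure_pmf.expectation (edge_draw Tok w e) (G e)"
      by (intro Bochner_Integration.integral_nonneg_AE AE_pmfI G_nonneg)
    show "measure_pmf.expectation (edge_draw Tok w e) (G e)
        \<le> ((f (fst e) + f (snd e)) / 2) ^ card (edge_tokens Tok w e)"
      unfolding G_def by (rule expectation_edge_draw_prod_le[OF \<open>finite Tok\<close> f])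
  next
    show "0 \<le> K" unfolding K_def using f by (intro prod_nonneg) auto
  qed
  also have "\<dots> = (\<Prod>i\<in>Tok. matching_avg M f (w i))"
    unfolding prod.split_matched_tokens[OF M \<open>finite Tok\<close>, of _ w] K_def
    by (simp add: matching_avg_edge_token[OF M] matching_avg_unmatched_token)
  finally show ?thesis .
qed

lemma expectation_round_step_sum:
  fixes g :: "'v \<Rightarrow> real"
  assumes M: "vertex_disjoint M" and "finite Tok" and g: "\<And>v. \<bar>g v\<bar> \<le> B"
  shows "measure_pmf.expectation (round_step Tok M w) (\<lambda>w'. \<Sum>i\<in>Tok. g (w' i))
         = (\<Sum>i\<in>Tok. matching_avg M g (w i))"
proof -
  define H where "H e A = (\<Sum>i\<in>edge_tokens Tok w e. g (if i \<in> A then fst e else snd e))" for e A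
  define K where "K = (\<Sum>i\<in>unmatched_tokens Tok w M. g (w i))"
  have H_integrable: "integrable (measure_pmf p) (\<lambda>C. H e (C e))" for p e
    unfolding H_def using g
    by (intro integrable_pmf_bounded[where B = "real (card (edge_tokens Tok w e)) * B"]
        order.trans[OF sum_abs sum_bounded_above])
  have split: "(\<Sum>i\<in>Tok. g (new_pos M w C i)) = (\<Sum>e\<in>M. H e (C e)) + K" for C
    unfolding sum.split_matched_tokens[OF M \<open>finite Tok\<close>, of _ w] H_def K_def
    by (intro arg_cong2[where f = "(+)"] sum.cong refl)
       (simp_all add: new_pos_edge_token[OF M] new_pos_unmatched_token)
  have "measure_pmf.expectation (round_step Tok M w) (\<lambda>w'. \<Sum>i\<in>Tok. g (w' i))
      = (\<Sum>e\<in>M. measure_pmf.expectation (Pi_pmf M {} (edge_draw Tok w)) (\<lambda>C. H e (C e))) + K"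
    unfolding round_step_def using H_integrable
    by (simp add: split Bochner_Integration.integral_add Bochner_Integration.integrable_sum
        Bochner_Integration.integral_sum)
  also have "\<dots> = (\<Sum>e\<in>M. real (card (edge_tokens Tok w e)) * ((g (fst e) + g (snd e)) / 2)) + K"
  proof (intro arg_cong2[where f = "(+)"] sum.cong refl)
    fix e assume "e \<in> M"
    then have "measure_pmf.expectation (Pi_pmf M {} (edge_draw Tok w)) (\<lambda>C. H e (C e))
        = measure_pmf.expectation (edge_draw Tok w e) (H e)"
      using M unfolding vertex_disjoint_def by (intro expectation_Pi_pmf_component) auto
    also have "\<dots> = real (card (edge_tokens Tok w e)) * ((g (fst e) + g (snd e)) / 2)"
      unfolding H_def by (rule expectation_edge_draw_sum[OF \<open>finite Tok\<close> g])
    finally show "measure_pmf.expectation (Pi_pmf M {} (edge_draw Tok w)) (\<lambda>C. H e (C e))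
        = real (card (edge_tokens Tok w e)) * ((g (fst e) + g (snd e)) / 2)" .
  qed
  also have "\<dots> = (\<Sum>i\<in>Tok. matching_avg M g (w i))"
    unfolding sum.split_matched_tokens[OF M \<open>finite Tok\<close>, of _ w] K_def
    by (simp add: matching_avg_edge_token[OF M] matching_avg_unmatched_token)
  finally show ?thesis .
qed

text \<open>\<open>iter_avg Ms t n f v\<close> is the expected value of \<open>f\<close> at the position at time
  \<open>t + n\<close> of a single token at \<open>v\<close> at time \<open>t\<close>; the last round is averaged first,
  mirroring the recursion of \<open>run\<close>.\<close>

fun iter_avg :: "(nat \<Rightarrow> ('v \<times> 'v) set) \<Rightarrow> nat \<Rightarrow> nat \<Rightarrow> ('v \<Rightarrow> real) \<Rightarrow> 'v \<Rightarrow> real" where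
  "iter_avg Ms t 0 f = f"
| "iter_avg Ms t (Suc n) f = iter_avg Ms t n (matching_avg (Ms (t + Suc n)) f)"

lemma iter_avg_bounded:
  assumes "\<And>v. A \<le> f v" "\<And>v. f v \<le> B"
  shows "A \<le> iter_avg Ms t n f v \<and> iter_avg Ms t n f v \<le> B"
  using assms
proof (induction n arbitrary: f)
  case (Suc n)
  then show ?case
    unfolding iter_avg.simps by (intro Suc.IH matching_avg_bounded)
qed simp

lemma iter_avg_affine:
  "iter_avg Ms t n (\<lambda>v. a + c * f v) = (\<lambda>v. a + c * iter_avg Ms t n f v)"
  by (induction n arbitrary: f) (simp_all add: matching_avg_affine)

lemma expectation_run_prod_le:
  fixes f :: "'v \<Rightarrow> real"
  assumes "finite Tok" and "\<And>k. 0 < k \<Longrightarrow> k \<le> n \<Longrightarrow> vertex_disjoint (Ms (t + k))"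
    and "\<And>v. 0 \<le> f v" "\<And>v. f v \<le> B"
  shows "measure_pmf.expectation (run Tok Ms t w0 n) (\<lambda>w. \<Prod>i\<in>Tok. f (w i))
         \<le> (\<Prod>i\<in>Tok. iter_avg Ms t n f (w0 i))"
  using assms(2-4)
proof (induction n arbitrary: f)
  case 0
  then show ?case by simp
next
  case (Suc n)
  let ?M = "Ms (t + Suc n)"
  have prod_bounded: "\<bar>\<Prod>i\<in>Tok. h (w i)\<bar> \<le> B ^ card Tok"
    if "\<And>v. 0 \<le> h v" "\<And>v. h v \<le> B" for h :: "'v \<Rightarrow> real" and w
    using that by (simp add: abs_of_nonneg prod_nonneg prod_le_power_card)
  have M: "vertex_disjoint ?M" using Suc.prems(1)[of "Suc n"] by simp
  have avg_bounds: "\<And>v. 0 \<le> matching_avg ?M f v" "\<And>v. matching_avg ?M f v \<le> B"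
    using matching_avg_bounded[of 0 f B] Suc.prems(2,3) by auto
  have "measure_pmf.expectation (run Tok Ms t w0 (Suc n)) (\<lambda>w. \<Prod>i\<in>Tok. f (w i))
      \<le> measure_pmf.expectation (run Tok Ms t w0 n) (\<lambda>w. \<Prod>i\<in>Tok. matching_avg ?M f (w i))"
    unfolding run.simps
    by (intro expectation_bind_pmf_le[where B = "B ^ card Tok" and C = "B ^ card Tok"] prod_bounded
        expectation_round_step_prod_le[OF M assms(1) Suc.prems(2,3)] Suc.prems(2,3) avg_bounds)
  also have "\<dots> \<le> (\<Prod>i\<in>Tok. iter_avg Ms t n (matching_avg ?M f) (w0 i))"
    using Suc.prems(1) by (intro Suc.IH avg_bounds) auto
  finally show ?case by simp
qed

lemma expectation_run_sum:
  fixes g :: "'v \<Rightarrow> real"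
  assumes "finite Tok" and "\<And>k. 0 < k \<Longrightarrow> k \<le> n \<Longrightarrow> vertex_disjoint (Ms (t + k))"
    and "\<And>v. \<bar>g v\<bar> \<le> B"
  shows "measure_pmf.expectation (run Tok Ms t w0 n) (\<lambda>w. \<Sum>i\<in>Tok. g (w i))
         = (\<Sum>i\<in>Tok. iter_avg Ms t n g (w0 i))"
  using assms(2,3)
proof (induction n arbitrary: g)
  case 0
  then show ?case by simp
next
  case (Suc n)
  let ?M = "Ms (t + Suc n)"
  have M: "vertex_disjoint ?M" using Suc.prems(1)[of "Suc n"] by simp
  have sum_bounded: "\<bar>\<Sum>i\<in>Tok. g (w i)\<bar> \<le> real (card Tok) * B" for w
    using Suc.prems(2) by (intro order.trans[OF sum_abs sum_bounded_above])
  have "- B \<le> g v" "g v \<le> B" for v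
    using Suc.prems(2)[of v] by auto
  then have avg_bounded: "\<bar>matching_avg ?M g v\<bar> \<le> B" for v
    using matching_avg_bounded[of "- B" g B ?M v] by auto
  have "measure_pmf.expectation (run Tok Ms t w0 (Suc n)) (\<lambda>w. \<Sum>i\<in>Tok. g (w i))
      = measure_pmf.expectation (run Tok Ms t w0 n) (\<lambda>w. \<Sum>i\<in>Tok. matching_avg ?M g (w i))"
    unfolding run.simps expectation_bind_pmf[OF sum_bounded]
    by (intro Bochner_Integration.integral_cong refl expectation_round_step_sum[OF M assms(1) Suc.prems(2)])
  also have "\<dots> = (\<Sum>i\<in>Tok. iter_avg Ms t n (matching_avg ?M g) (w0 i))"
    using Suc.prems(1) avg_bounded by (intro Suc.IH) auto
  finally show ?case by simp
qed

lemma mgf_run_count_le: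
  fixes \<delta> :: real and D :: "'v set"
  assumes "finite Tok" and "\<And>k. 0 < k \<Longrightarrow> k \<le> n \<Longrightarrow> vertex_disjoint (Ms (t + k))"
    and "0 \<le> \<delta>"
  defines "Z \<equiv> \<lambda>w. real (card {i \<in> Tok. w i \<in> D})"
  shows "measure_pmf.expectation (run Tok Ms t w0 n) (\<lambda>w. (1 + \<delta>) powr Z w)
         \<le> exp (\<delta> * measure_pmf.expectation (run Tok Ms t w0 n) Z)"
proof -
  let ?p = "run Tok Ms t w0 n"
  define q where "q i = iter_avg Ms t n (\<lambda>v. of_bool (v \<in> D)) (w0 i)" for i
  have q_nonneg: "0 \<le> q i" for i
    unfolding q_def using iter_avg_bounded[of 0 "\<lambda>v. of_bool (v \<in> D)" 1] by simp
  have Z_sum: "Z = (\<lambda>w. \<Sum>i\<in>Tok. of_bool (w i \<in> D))"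
    using \<open>finite Tok\<close> unfolding Z_def by (simp add: Int_def)
  have Z_prod: "(1 + \<delta>) powr Z w = (\<Prod>i\<in>Tok. 1 + \<delta> * of_bool (w i \<in> D))" for w
  proof -
    have "(\<Prod>i\<in>Tok. 1 + \<delta> * of_bool (w i \<in> D)) = (\<Prod>i\<in>{i \<in> Tok. w i \<in> D}. 1 + \<delta>)"
      using \<open>finite Tok\<close> by (intro prod.mono_neutral_cong_right) auto
    then show ?thesis
      unfolding Z_def using \<open>0 \<le> \<delta>\<close> by (simp add: powr_realpow)
  qed
  have mean: "measure_pmf.expectation ?p Z = (\<Sum>i\<in>Tok. q i)"
    unfolding Z_sum q_def
    by (rule expectation_run_sum[where Ms = Ms and t = t and n = n and B = 1, OF assms(1,2)]) simp_all
  have "measure_pmf.expectation ?p (\<lambda>w. (1 + \<delta>) powr Z w)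
      = measure_pmf.expectation ?p (\<lambda>w. \<Prod>i\<in>Tok. 1 + \<delta> * of_bool (w i \<in> D))"
    by (simp only: Z_prod)
  also have "\<dots> \<le> (\<Prod>i\<in>Tok. iter_avg Ms t n (\<lambda>v. 1 + \<delta> * of_bool (v \<in> D)) (w0 i))"
    by (rule expectation_run_prod_le[where Ms = Ms and t = t and n = n and B = "1 + \<delta>", OF assms(1,2)])
       (simp_all add: \<open>0 \<le> \<delta>\<close>)
  also have "\<dots> = (\<Prod>i\<in>Tok. 1 + \<delta> * q i)"
    by (simp add: q_def iter_avg_affine)
  also have "\<dots> \<le> (\<Prod>i\<in>Tok. exp (\<delta> * q i))"
    using q_nonneg \<open>0 \<le> \<delta>\<close> by (intro prod_mono) (auto simp: exp_ge_add_one_self)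
  also have "\<dots> = exp (\<delta> * measure_pmf.expectation ?p Z)"
    using \<open>finite Tok\<close> by (simp add: mean exp_sum sum_distrib_left)
  finally show ?thesis .
qed

lemma card_tokens_in_eq_sum_load:
  assumes "finite D" "finite Tok"
  shows "card {i \<in> Tok. w i \<in> D} = (\<Sum>u\<in>D. load Tok w u)"
proof -
  have "card {i \<in> Tok. w i \<in> D} = card (\<Union>u\<in>D. {i \<in> Tok. w i = u})"
    by (rule arg_cong[where f = card]) auto
  also have "\<dots> = (\<Sum>u\<in>D. card {i \<in> Tok. w i = u})"
    by (rule card_UN_disjoint) (use assms in auto)
  finally show ?thesis
    unfolding load_def .
qed

theorem lemma3p3:
  fixes V :: "'v set" and E :: "'v set set" and Tok :: "'t set"
    and Ms :: "nat \<Rightarrow> ('v \<times> 'v) set" and w0 :: "'t \<Rightarrow> 'v"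
    and D :: "'v set" and t1 t2 :: nat and \<delta> :: real
  assumes "finite V" and "\<forall>e\<in>E. \<exists>u v. e = {u, v} \<and> u \<noteq> v \<and> u \<in> V \<and> v \<in> V"
    and "finite Tok" and "\<forall>i\<in>Tok. w0 i \<in> V"
    and "\<forall>t. t1 < t \<and> t \<le> t2 \<longrightarrow> is_matching V E (Ms t)"
    and "D \<subseteq> V" and "t1 < t2" and "\<delta> > 0"
  shows "let p = run Tok Ms t1 w0 (t2 - t1);
             Z = (\<lambda>w. real (card {i \<in> Tok. w i \<in> D}));
             EZ = measure_pmf.expectation p Z
         in Z = (\<lambda>w. real (\<Sum>u\<in>D. load Tok w u)) \<and>
            measure_pmf.prob p {w. Z w \<ge> (1 + \<delta>) * EZ}
              \<le> (exp \<delta> / (1 + \<delta>) powr (1 + \<delta>)) powr EZ"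
proof -
  define p where "p = run Tok Ms t1 w0 (t2 - t1)"
  define Z where "Z = (\<lambda>w :: 't \<Rightarrow> 'v. real (card {i \<in> Tok. w i \<in> D}))"
  have "finite D" using assms(1,6) by (rule finite_subset[rotated])
  then have load: "Z = (\<lambda>w. real (\<Sum>u\<in>D. load Tok w u))"
    unfolding Z_def using assms(3) by (simp add: card_tokens_in_eq_sum_load)
  have "vertex_disjoint (Ms (t1 + k))" if "0 < k" "k \<le> t2 - t1" for k
    using assms(5) that by (intro vertex_disjoint_if_is_matching[of V E]) auto
  then have "measure_pmf.expectation p (\<lambda>w. (1 + \<delta>) powr Z w) \<le> exp (\<delta> * measure_pmf.expectation p Z)"
    unfolding p_def Z_def using assms(3,8) by (intro mgf_run_count_le) auto
  then have "measure_pmf.prob p {w. Z w \<ge> (1 + \<delta>) * measure_pmf.expectation p Z}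
      \<le> (exp \<delta> / (1 + \<delta>) powr (1 + \<delta>)) powr measure_pmf.expectation p Z"
    using assms(3,8) unfolding Z_def
    by (intro chernoff_bound_from_mgf[where C = "card Tok"]) (auto intro: card_mono)
  with load show ?thesis
    unfolding p_def Z_def Let_def by simp
qed

end
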